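(* Let $a\ge6$ and $n\ge1$ be integers, let $u\in\mathbb{C}$ with $\mathrm{Re}(u)\le0$ and $|\mathrm{Im}(u)|\le3\pi$, and let $L$ be a vertical line contained in the strip $0<\mathrm{Re}(z)<1$, oriented from $+i\infty$ to $-i\infty$. Define $$J_n(u)=\frac{n}{2i\pi}\int_L R_n(nz)\left(\frac{\pi}{\sin(n\pi z)}\right)^3e^{nuz}\,dz.$$ Then: (i) $$J_n(u)=\frac{(-1)^n n^2}{2i\pi}\,n!^{a-6}\int_L\left(z+\frac12\right)\frac{\Gamma(nz)^{a+3}\,\Gamma(n-nz+1)^3\,\Gamma(nz+2n+1)^3}{\Gamma(nz+n+1)^{a+3}}\,e^{nuz}\,dz;$$ (ii) $$S_n(1)=\mathrm{Re}\big(J_n(i\pi)\big).$$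
   Context: Fix an integer $a\ge6$. For complex $x$ and integer $m\ge0$, $(x)_m=x(x+1)\cdots(x+m-1)$. For an integer $n\ge1$, $$R_n(t)=n!^{a-6}\left(t+\frac n2\right)\frac{(t-n)_n^3\,(t+n+1)_n^3}{(t)_{n+1}^a},\qquad S_n(1)=\sum_{k=1}^{\infty}\frac12R_n''(k).$$ $\Gamma$ is Euler's Gamma function. *)

theory Defs
  imports "HOL-Analysis.Analysis"
begin

definition R :: "nat \<Rightarrow> nat \<Rightarrow> complex \<Rightarrow> complex" where
  "R a n t = (fact n) ^ (a - 6) * (t + of_nat n / 2)
     * (pochhammer (t - of_nat n) n) ^ 3 * (pochhammer (t + of_nat n + 1) n) ^ 3
     / (pochhammer t (n + 1)) ^ a"

definition Rr :: "nat \<Rightarrow> nat \<Rightarrow> real \<Rightarrow> real" where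
  "Rr a n t = (fact n) ^ (a - 6) * (t + real n / 2)
     * (pochhammer (t - real n) n) ^ 3 * (pochhammer (t + real n + 1) n) ^ 3
     / (pochhammer t (n + 1)) ^ a"

text \<open>Integral along the vertical line Re z = c, oriented from +i infinity to -i infinity,
  parametrised by z(y) = c - i y, y in R (so dz = -i dy).\<close>
definition vline_integral :: "real \<Rightarrow> (complex \<Rightarrow> complex) \<Rightarrow> complex" where
  "vline_integral c f = integral UNIV (\<lambda>y::real. f (Complex c (- y)) * (- \<i>))"

definition J_integrand :: "nat \<Rightarrow> nat \<Rightarrow> complex \<Rightarrow> complex \<Rightarrow> complex" where
  "J_integrand a n u z = R a n (of_nat n * z) * (of_real pi / sin (of_nat n * of_real pi * z)) ^ 3
      * exp (of_nat n * u * z)"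

definition J :: "nat \<Rightarrow> nat \<Rightarrow> real \<Rightarrow> complex \<Rightarrow> complex" where
  "J a n c u = of_nat n / (2 * \<i> * of_real pi) * vline_integral c (J_integrand a n u)"

end

theory Submission
  imports Defs "HOL-Complex_Analysis.Complex_Analysis" "HOL-Probability.Sinc_Integral" "HOL-Real_Asymp.Real_Asymp"
begin

(* Substituting t = n z turns J_n(u) into the integral of J_kernel = R_n(t) (pi / sin(pi t))^3 e^(u t)
   along the vertical line Re t = n c.  Part (i) is then a pointwise identity: Gamma(t) Gamma(1 - t) =
   pi / sin(pi t), and every Pochhammer symbol in R_n is a quotient of Gamma values.

   For part (ii) take u = i pi.  With cot = pi cot(pi t) one has (pi / sin(pi t))^3 e^(i pi t) =
   cot''/2 - i pi cot', so two integrations by parts show that the residue at every integer k >= 1 is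
   R_n''(k)/2 + i pi R_n'(k), whose real part is R_n''(k)/2; for k <= n the triple zero of R_n cancels
   the pole.  Close the line by the rectangle with corners n c -+ i N and N + 1/2 -+ i N: on its three
   other edges the sine kernel is bounded while R_n(t) = O(|t|^-2), so they contribute O(1/N), and the
   residue theorem turns the line integral into the series. *)

lemma residue_derivative_eq_0:
  assumes "open U" "z \<in> U" "g holomorphic_on U - {z}"
    and "\<And>w. w \<in> U - {z} \<Longrightarrow> (f has_field_derivative g w) (at w)"
  shows "residue g z = 0"
proof -
  obtain r where r: "r > 0" "cball z r \<subseteq> U" using open_contains_cball assms(1,2) by blast
  have "(g has_contour_integral 2 * pi * \<i> * residue g z) (circlepath z r)"
    by (rule base_residue[OF assms(1,2) r(1) assms(3) r(2)])
  moreover have "(g has_contour_integral 0) (circlepath z r)"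
  proof (rule Cauchy_theorem_primitive)
    show "path_image (circlepath z r) \<subseteq> U - {z}"
      using r by (auto simp: path_image_circlepath)
  qed (auto intro: has_field_derivative_at_within assms(4))
  ultimately show ?thesis using has_contour_integral_unique by fastforce
qed

lemma residue_mult_derivative:
  assumes "open U" "z \<in> U" "h holomorphic_on U"
    and f': "\<And>w. w \<in> U - {z} \<Longrightarrow> (f has_field_derivative f' w) (at w)"
  shows "residue (\<lambda>w. h w * f' w) z = - residue (\<lambda>w. deriv h w * f w) z"
proof -
  have "open (U - {z})" using assms(1) by auto
  have f: "f holomorphic_on U - {z}"
    using f' \<open>open (U - {z})\<close> by (auto simp: holomorphic_on_open)
  have "f' holomorphic_on U - {z}"
  proof (rule holomorphic_cong[THEN iffD1])
    show "deriv f holomorphic_on U - {z}" by (rule holomorphic_deriv[OF f \<open>open (U - {z})\<close>])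
    show "deriv f w = f' w" if "w \<in> U - {z}" for w by (rule DERIV_imp_deriv[OF f'[OF that]])
  qed simp
  hence hf': "(\<lambda>w. h w * f' w) holomorphic_on U - {z}"
    by (intro holomorphic_intros holomorphic_on_subset[OF assms(3)]) auto
  have dhf: "(\<lambda>w. deriv h w * f w) holomorphic_on U - {z}"
    using assms(1,3) by (intro holomorphic_intros f holomorphic_on_subset[OF holomorphic_deriv]) auto
  have "residue (\<lambda>w. deriv h w * f w + h w * f' w) z = 0"
  proof (rule residue_derivative_eq_0[OF assms(1,2)])
    show "(\<lambda>w. deriv h w * f w + h w * f' w) holomorphic_on U - {z}" by (intro holomorphic_intros dhf hf')
    fix w assume w: "w \<in> U - {z}"
    have "(h has_field_derivative deriv h w) (at w)"
      using assms(1,3) w by (intro holomorphic_derivI[of h U]) auto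
    thus "((\<lambda>w. h w * f w) has_field_derivative deriv h w * f w + h w * f' w) (at w)"
      using f'[OF w] by (auto intro!: derivative_eq_intros)
  qed
  moreover have "residue (\<lambda>w. deriv h w * f w + h w * f' w) z
      = residue (\<lambda>w. deriv h w * f w) z + residue (\<lambda>w. h w * f' w) z"
    by (rule residue_add[OF assms(1,2) dhf hf'])
  ultimately show ?thesis by (simp add: add_eq_0_iff)
qed

lemma has_real_derivative_of_complex:
  fixes g :: "complex \<Rightarrow> complex" and h :: "real \<Rightarrow> real"
  assumes g: "(g has_field_derivative D) (at (of_real x))"
    and eq: "eventually (\<lambda>y. g (of_real y) = of_real (h y)) (nhds x)"
  shows "(h has_real_derivative Re D) (at x)" "Im D = 0"
proof -
  have hD: "((\<lambda>y. of_real (h y)) has_vector_derivative D) (at x)"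
    using has_vector_derivative_real_field[OF g, of UNIV] eq eventually_nhds_x_imp_x[OF eq]
      has_vector_derivative_cong_ev[where f = "\<lambda>y. g (of_real y)" and g = "\<lambda>y. of_real (h y)"
        and x = x and S = UNIV and f' = D]
    by simp
  from has_field_derivative_Re[OF hD] show "(h has_real_derivative Re D) (at x)" by simp
  from has_field_derivative_Im[OF hD] have "((\<lambda>y. 0) has_real_derivative Im D) (at x)" by simp
  thus "Im D = 0" using DERIV_unique[OF _ DERIV_const] by blast
qed

lemma integrable_lborel_continuous_inverse_square_decay:
  fixes f :: "real \<Rightarrow> 'a::{banach, second_countable_topology}"
  assumes cont: "continuous_on UNIV f" and decay: "\<And>s. 1 \<le> \<bar>s\<bar> \<Longrightarrow> norm (f s) \<le> C / s ^ 2"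
  shows "integrable lborel f"
proof -
  have "bounded (f ` {-1..1})"
    by (intro compact_imp_bounded compact_continuous_image continuous_on_subset[OF cont]) auto
  then obtain M where "\<forall>x\<in>f ` {-1..1}. norm x \<le> M" by (auto simp: bounded_iff)
  hence M: "\<And>s. s \<in> {-1..1} \<Longrightarrow> norm (f s) \<le> M" by blast
  have "norm (f 0) \<le> M" "norm (f 1) \<le> C" using M[of 0] decay[of 1] by simp_all
  hence "0 \<le> M" "0 \<le> C" using norm_ge_zero[of "f 0"] norm_ge_zero[of "f 1"] by linarith+
  have bound: "norm (f s) \<le> norm ((2 * M + 2 * C) / (1 + s ^ 2))" for s
  proof -
    have pos: "0 < 1 + s ^ 2" by (simp add: add_pos_nonneg)
    have "norm (f s) * (1 + s ^ 2) \<le> 2 * M + 2 * C"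
    proof (cases "\<bar>s\<bar> \<le> 1")
      case True
      hence "s ^ 2 \<le> 1" by (simp add: abs_square_le_1)
      have "norm (f s) * (1 + s ^ 2) \<le> M * 2"
        by (rule mult_mono) (use M[of s] True \<open>s ^ 2 \<le> 1\<close> \<open>0 \<le> M\<close> in \<open>auto simp: abs_le_iff\<close>)
      thus ?thesis using \<open>0 \<le> C\<close> by linarith
    next
      case False
      hence s1: "1 \<le> s ^ 2" using abs_square_le_1[of s] by linarith
      have "norm (f s) * (1 + s ^ 2) \<le> C / s ^ 2 * (2 * s ^ 2)"
        by (rule mult_mono) (use decay[of s] False s1 \<open>0 \<le> C\<close> in auto)
      also have "\<dots> = 2 * C" using s1 by (cases "s = 0") simp_all
      finally show ?thesis using \<open>0 \<le> M\<close> by linarith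
    qed
    hence "norm (f s) \<le> (2 * M + 2 * C) / (1 + s ^ 2)" using pos by (simp add: pos_le_divide_eq)
    thus ?thesis using \<open>0 \<le> M\<close> \<open>0 \<le> C\<close> pos by simp
  qed
  have "integrable lborel (\<lambda>s::real. inverse (1 + s ^ 2))"
    using integrable_inverse_1_plus_square by (simp add: set_integrable_def einterval_def)
  hence "integrable lborel (\<lambda>s::real. (2 * M + 2 * C) / (1 + s ^ 2))" by (simp add: divide_inverse)
  moreover have "f \<in> borel_measurable lborel" using borel_measurable_continuous_onI[OF cont] by simp
  ultimately show ?thesis
    by (rule Bochner_Integration.integrable_bound) (intro AE_I2 bound)
qed

lemma integral_UNIV_stretch:
  fixes f :: "real \<Rightarrow> 'a::euclidean_space"
  assumes "integrable lborel f" "c \<noteq> 0"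
  shows "(\<lambda>x. f (c * x)) integrable_on UNIV" "integral UNIV (\<lambda>x. f (c * x)) = integral UNIV f /\<^sub>R \<bar>c\<bar>"
proof -
  have "integrable lborel (\<lambda>x. f (0 + c * x))" by (rule lborel_integrable_real_affine[OF assms])
  hence "integrable lborel (\<lambda>x. f (c * x))" by simp
  thus "(\<lambda>x. f (c * x)) integrable_on UNIV" by (rule integrable_on_lborel)
  show "integral UNIV (\<lambda>x. f (c * x)) = integral UNIV f /\<^sub>R \<bar>c\<bar>"
    using lborel_integral_real_affine[OF assms(2), of f 0] assms \<open>integrable lborel (\<lambda>x. f (0 + c * x))\<close>
    by (simp add: integral_lborel)
qed

lemma tendsto_integral_symmetric_interval:
  fixes f :: "real \<Rightarrow> 'a::banach"
  assumes "f integrable_on UNIV"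
  shows "((\<lambda>M. integral {-M..M} f) \<longlongrightarrow> integral UNIV f) at_top"
proof (rule tendstoI)
  fix e :: real assume "0 < e"
  have "(f has_integral integral UNIV f) UNIV" using assms by (rule integrable_integral)
  then obtain B where "0 < B"
    and B: "\<And>a b. ball 0 B \<subseteq> cbox a b \<Longrightarrow> norm (integral (cbox a b) f - integral UNIV f) < e"
    using \<open>0 < e\<close> unfolding has_integral_alt'[of f _ UNIV] by auto
  show "eventually (\<lambda>M. dist (integral {-M..M} f) (integral UNIV f) < e) at_top"
    unfolding eventually_at_top_linorder
  proof (intro exI allI impI)
    fix M assume "B \<le> M"
    hence "ball 0 B \<subseteq> cbox (-M) M" by (auto simp: dist_real_def)
    thus "dist (integral {-M..M} f) (integral UNIV f) < e" using B by (simp add: dist_norm)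
  qed
qed

lemma contour_integral_vertical_linepath:
  assumes "f contour_integrable_on linepath (Complex x y0) (Complex x y1)" "y0 < y1"
  shows "contour_integral (linepath (Complex x y1) (Complex x y0)) f = - \<i> * integral {y0..y1} (\<lambda>y. f (Complex x y))"
proof -
  have "(f has_contour_integral contour_integral (linepath (Complex x y0) (Complex x y1)) f)
      (linepath (Complex x y0) (Complex x y1))"
    by (rule has_contour_integral_integral[OF assms(1)])
  hence "((\<lambda>y. f (Complex x y)) has_integral - \<i> * contour_integral (linepath (Complex x y0) (Complex x y1)) f) {y0..y1}"
    using has_contour_integral_linepath_same_Re_iff[of "Complex x y0" x "Complex x y1" y0 y1 f] assms(2) by simp
  hence "integral {y0..y1} (\<lambda>y. f (Complex x y)) = - \<i> * contour_integral (linepath (Complex x y0) (Complex x y1)) f"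
    by (rule integral_unique)
  thus ?thesis using contour_integral_reversepath[of "linepath (Complex x y0) (Complex x y1)" f] by simp
qed

lemma norm_rectpath_integral_add_left_edge_le:
  fixes x0 x1 y0 y1 B :: real
  defines "\<gamma> \<equiv> rectpath (Complex x0 y0) (Complex x1 y1)"
  assumes f: "f holomorphic_on S" "open S" "path_image \<gamma> \<subseteq> S"
    and "x0 \<le> x1" "y0 < y1" "0 \<le> B"
    and bound: "\<And>t. t \<in> path_image \<gamma> \<Longrightarrow> Re t = x1 \<or> Im t = y0 \<or> Im t = y1 \<Longrightarrow> norm (f t) \<le> B"
  shows "norm (contour_integral \<gamma> f + \<i> * integral {y0..y1} (\<lambda>y. f (Complex x0 y)))
    \<le> B * (2 * (x1 - x0) + (y1 - y0))"
proof -
  define a1 a2 a3 a4 where "a1 = Complex x0 y0" "a2 = Complex x1 y0" "a3 = Complex x1 y1" "a4 = Complex x0 y1"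
  have \<gamma>: "\<gamma> = linepath a1 a2 +++ linepath a2 a3 +++ linepath a3 a4 +++ linepath a4 a1"
    by (simp add: \<gamma>_def rectpath_def Let_def a1_a2_a3_a4_def)
  have segs: "closed_segment a1 a2 \<subseteq> path_image \<gamma>" "closed_segment a2 a3 \<subseteq> path_image \<gamma>"
    "closed_segment a3 a4 \<subseteq> path_image \<gamma>" "closed_segment a4 a1 \<subseteq> path_image \<gamma>"
    unfolding \<gamma> by (auto simp: path_image_join)
  have int: "f contour_integrable_on linepath p q" if "closed_segment p q \<subseteq> path_image \<gamma>" for p q
    using that f by (intro contour_integrable_holomorphic_simple[of f S]) auto
  have left: "contour_integral (linepath a4 a1) f = - \<i> * integral {y0..y1} (\<lambda>y. f (Complex x0 y))"
    using segs(4) \<open>y0 < y1\<close> unfolding a1_a2_a3_a4_def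
    by (intro contour_integral_vertical_linepath int) (simp add: closed_segment_commute)
  have "contour_integral \<gamma> f + \<i> * integral {y0..y1} (\<lambda>y. f (Complex x0 y))
      = contour_integral (linepath a1 a2) f + contour_integral (linepath a2 a3) f + contour_integral (linepath a3 a4) f"
    unfolding \<gamma> using int segs left by (simp add: contour_integrable_joinI valid_path_join)
  also have "norm \<dots> \<le> B * norm (a2 - a1) + B * norm (a3 - a2) + B * norm (a4 - a3)"
  proof (intro norm_triangle_le add_mono contour_integral_bound_linepath int segs \<open>0 \<le> B\<close>)
    fix t assume "t \<in> closed_segment a1 a2"
    thus "norm (f t) \<le> B" using segs(1) by (intro bound) (auto simp: a1_a2_a3_a4_def closed_segment_same_Im)
  next
    fix t assume "t \<in> closed_segment a2 a3"
    thus "norm (f t) \<le> B" using segs(2) by (intro bound) (auto simp: a1_a2_a3_a4_def closed_segment_same_Re)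
  next
    fix t assume "t \<in> closed_segment a3 a4"
    thus "norm (f t) \<le> B" using segs(3) by (intro bound) (auto simp: a1_a2_a3_a4_def closed_segment_same_Im)
  qed
  also have "\<dots> = B * (2 * (x1 - x0) + (y1 - y0))"
    using \<open>x0 \<le> x1\<close> \<open>y0 < y1\<close> by (simp add: a1_a2_a3_a4_def cmod_def algebra_simps)
  finally show ?thesis .
qed

section \<open>The sine kernel\<close>

lemma sin_pi_neq_0: "(t::complex) \<notin> \<int> \<Longrightarrow> sin (of_real pi * t) \<noteq> 0"
  by (subst sin_eq_0) auto

lemma Ints_in_ball_of_nat:
  fixes t :: complex
  assumes "t \<in> \<int>" "t \<in> ball (of_nat k) 1"
  shows "t = of_nat k"
proof -
  obtain m where m: "t = of_int m" using assms(1) by (auto elim: Ints_cases)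
  have "norm (of_int (m - int k) :: complex) < 1"
    using assms(2) by (simp add: m dist_norm norm_minus_commute)
  hence "\<bar>of_int (m - int k)\<bar> < (1::real)" by (simp only: norm_of_int)
  hence "m = int k" by linarith
  thus ?thesis using m by simp
qed

lemma sin_pi_neq_0_punctured_ball:
  "(t::complex) \<in> ball (of_nat k) 1 - {of_nat k} \<Longrightarrow> sin (of_real pi * t) \<noteq> 0"
  using Ints_in_ball_of_nat sin_pi_neq_0 by blast

lemma ball_of_nat_subset_Re_pos:
  assumes "1 \<le> k"
  shows "ball (of_nat k) 1 \<subseteq> {t::complex. 0 < Re t}"
proof
  fix t :: complex assume "t \<in> ball (of_nat k) 1"
  hence "\<bar>Re t - real k\<bar> < 1"
    using abs_Re_le_cmod[of "t - of_nat k"] by (simp add: dist_norm norm_minus_commute)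
  thus "t \<in> {t. 0 < Re t}" using assms by simp
qed

lemma punctured_ball_of_nat_subset:
  "1 \<le> k \<Longrightarrow> ball (of_nat k) 1 - {of_nat k} \<subseteq> {t::complex. 0 < Re t} - \<int>"
  using ball_of_nat_subset_Re_pos Ints_in_ball_of_nat by blast

lemma tendsto_sub_div_sin_pi:
  "((\<lambda>t::complex. (t - of_nat k) / sin (of_real pi * t)) \<longlongrightarrow> (-1) ^ k / of_real pi) (at (of_nat k))"
proof -
  have "((\<lambda>t::complex. sin (of_real pi * t)) has_field_derivative of_real pi * (-1) ^ k) (at (of_nat k))"
    using cos_npi_complex'[of k] by (auto intro!: derivative_eq_intros simp: mult.commute)
  hence "((\<lambda>t::complex. sin (of_real pi * t) / (t - of_nat k)) \<longlongrightarrow> of_real pi * (-1) ^ k) (at (of_nat k))"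
    using sin_npi_complex'[of k] by (simp add: has_field_derivative_iff mult.commute)
  hence "((\<lambda>t::complex. inverse (sin (of_real pi * t) / (t - of_nat k)))
      \<longlongrightarrow> inverse (of_real pi * (-1) ^ k)) (at (of_nat k))"
    by (intro tendsto_inverse) auto
  moreover have "inverse (of_real pi * (-1) ^ k) = ((-1) ^ k / of_real pi :: complex)"
    by (simp add: field_simps power_minus_odd)
  ultimately show ?thesis by (simp add: inverse_eq_divide)
qed

lemma norm_sin_ge_exp_abs_Im:
  fixes z :: complex
  assumes "pi \<le> \<bar>Im z\<bar>"
  shows "exp \<bar>Im z\<bar> / 3 \<le> norm (sin z)"
proof -
  define E where "E = exp \<bar>Im z\<bar>"
  have "3 \<le> 1 + pi" using pi_gt3 by simp
  also have "1 + pi \<le> exp pi" by (rule exp_ge_add_one_self)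
  also have "exp pi \<le> E" unfolding E_def using assms by simp
  finally have E3: "3 \<le> E" .
  have "E - inverse E = \<bar>norm (exp (- (\<i> * z))) - norm (exp (\<i> * z))\<bar>"
    unfolding E_def by (cases "0 \<le> Im z") (simp_all add: exp_minus[symmetric] abs_if)
  also have "\<dots> \<le> norm (exp (- (\<i> * z)) - exp (\<i> * z))" by (rule norm_triangle_ineq3)
  also have "\<dots> = 2 * norm (sin z)" by (simp add: sin_exp_eq' norm_mult)
  finally have "E - inverse E \<le> 2 * norm (sin z)" .
  moreover have "inverse E \<le> 1" using E3 by (simp add: inverse_le_1_iff)
  ultimately show ?thesis using E3 unfolding E_def by linarith
qed

lemma norm_sin_half_integer_line:
  fixes w :: complex
  assumes "Re w = (of_nat N + 1 / 2) * pi"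
  shows "norm (sin w) = (exp (Im w) + inverse (exp (Im w))) / 2"
proof -
  have "cos (2 * Re w) = cos (real (2 * N + 1) * pi)" using assms by (simp add: algebra_simps)
  also have "\<dots> = -1" by (simp only: cos_npi) simp
  finally have "cos (2 * Re w) = -1" .
  hence "norm (sin w) ^ 2 = (exp (Im w) ^ 2 + inverse (exp (Im w) ^ 2) + 2) / 4"
    by (simp add: norm_sin_squared exp_double)
  also have "\<dots> = ((exp (Im w) + inverse (exp (Im w))) / 2) ^ 2"
    by (simp add: power2_eq_square field_simps)
  finally have "norm (sin w) ^ 2 = ((exp (Im w) + inverse (exp (Im w))) / 2) ^ 2" .
  thus ?thesis by (rule power2_eq_imp_eq) (auto intro: add_pos_pos)
qed

definition cot_pi :: "complex \<Rightarrow> complex" where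
  "cot_pi t = of_real pi * cos (of_real pi * t) / sin (of_real pi * t)"

definition cot_pi' :: "complex \<Rightarrow> complex" where
  "cot_pi' t = - (of_real pi ^ 2) / sin (of_real pi * t) ^ 2"

definition cot_pi'' :: "complex \<Rightarrow> complex" where
  "cot_pi'' t = 2 * of_real pi ^ 3 * cos (of_real pi * t) / sin (of_real pi * t) ^ 3"

lemma cot_pi_has_field_derivative:
  assumes "sin (of_real pi * t) \<noteq> 0"
  shows "(cot_pi has_field_derivative cot_pi' t) (at t)"
proof -
  define s c where "s = sin (of_real pi * t)" and "c = cos (of_real pi * t)"
  have "(cot_pi has_field_derivative of_real pi * (- s * of_real pi * s - c * (c * of_real pi)) / s ^ 2) (at t)"
    unfolding cot_pi_def[abs_def] s_def c_def using assms
    by (auto intro!: derivative_eq_intros simp: power2_eq_square field_simps)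
  also have "of_real pi * (- s * of_real pi * s - c * (c * of_real pi)) = - (of_real pi ^ 2) * (s ^ 2 + c ^ 2)"
    by (simp add: algebra_simps power2_eq_square)
  finally show ?thesis by (simp add: cot_pi'_def s_def c_def)
qed

lemma cot_pi'_has_field_derivative:
  assumes "sin (of_real pi * t) \<noteq> 0"
  shows "(cot_pi' has_field_derivative cot_pi'' t) (at t)"
  unfolding cot_pi'_def[abs_def] cot_pi''_def using assms
  by (auto intro!: derivative_eq_intros simp: power2_eq_square power3_eq_cube field_simps)

lemma tendsto_cot_pi_mult:
  "((\<lambda>t. cot_pi t * (t - of_nat k)) \<longlongrightarrow> 1) (at (of_nat k))"
proof -
  have "cos (of_real pi * of_nat k :: complex) = (-1) ^ k"
    using cos_npi_complex'[of k] by (simp add: mult.commute)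
  moreover have "isCont (\<lambda>t::complex. of_real pi * cos (of_real pi * t)) (of_nat k)" by simp
  ultimately have "((\<lambda>t::complex. of_real pi * cos (of_real pi * t)) \<longlongrightarrow> of_real pi * (-1) ^ k) (at (of_nat k))"
    by (simp add: isCont_def)
  from tendsto_mult[OF this tendsto_sub_div_sin_pi]
  have "((\<lambda>t::complex. of_real pi * cos (of_real pi * t) * ((t - of_nat k) / sin (of_real pi * t)))
      \<longlongrightarrow> of_real pi * (-1) ^ k * ((-1) ^ k / of_real pi)) (at (of_nat k))" .
  moreover have "of_real pi * (-1) ^ k * ((-1) ^ k / of_real pi) = (1::complex)"
    by (simp add: mult.assoc flip: power_mult_distrib)
  ultimately show ?thesis by (simp add: cot_pi_def divide_inverse mult_ac)
qed

lemma residue_mult_cot_pi: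
  assumes "h holomorphic_on ball (of_nat k) 1"
  shows "residue (\<lambda>t. h t * cot_pi t) (of_nat k) = h (of_nat k)"
proof (rule residue_simple'[OF open_ball])
  show "(\<lambda>t. h t * cot_pi t) holomorphic_on ball (of_nat k) 1 - {of_nat k}"
    unfolding cot_pi_def
    by (intro holomorphic_intros holomorphic_on_subset[OF assms] sin_pi_neq_0_punctured_ball) auto
  have "isCont h (of_nat k)"
    using assms by (intro holomorphic_on_imp_continuous_on[THEN continuous_on_interior]) auto
  hence "((\<lambda>t. h t * (cot_pi t * (t - of_nat k))) \<longlongrightarrow> h (of_nat k) * 1) (at (of_nat k))"
    by (intro tendsto_mult tendsto_cot_pi_mult) (simp add: isCont_def)
  thus "((\<lambda>t. h t * cot_pi t * (t - of_nat k)) \<longlongrightarrow> h (of_nat k)) (at (of_nat k))"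
    by (simp add: mult.assoc)
qed simp

lemma residue_mult_cot_pi':
  assumes "h holomorphic_on ball (of_nat k) 1"
  shows "residue (\<lambda>t. h t * cot_pi' t) (of_nat k) = - deriv h (of_nat k)"
proof -
  have "residue (\<lambda>t. h t * cot_pi' t) (of_nat k) = - residue (\<lambda>t. deriv h t * cot_pi t) (of_nat k)"
    using assms
    by (intro residue_mult_derivative[of "ball (of_nat k) 1"] cot_pi_has_field_derivative
        sin_pi_neq_0_punctured_ball) auto
  also have "residue (\<lambda>t. deriv h t * cot_pi t) (of_nat k) = deriv h (of_nat k)"
    by (intro residue_mult_cot_pi holomorphic_deriv assms) simp
  finally show ?thesis .
qed

lemma residue_mult_cot_pi'':
  assumes "h holomorphic_on ball (of_nat k) 1"
  shows "residue (\<lambda>t. h t * cot_pi'' t) (of_nat k) = deriv (deriv h) (of_nat k)"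
proof -
  have "residue (\<lambda>t. h t * cot_pi'' t) (of_nat k) = - residue (\<lambda>t. deriv h t * cot_pi' t) (of_nat k)"
    using assms
    by (intro residue_mult_derivative[of "ball (of_nat k) 1"] cot_pi'_has_field_derivative
        sin_pi_neq_0_punctured_ball) auto
  also have "residue (\<lambda>t. deriv h t * cot_pi' t) (of_nat k) = - deriv (deriv h) (of_nat k)"
    by (intro residue_mult_cot_pi' holomorphic_deriv assms) simp
  finally show ?thesis by simp
qed

definition csc3_exp :: "complex \<Rightarrow> complex \<Rightarrow> complex" where
  "csc3_exp u t = (of_real pi / sin (of_real pi * t)) ^ 3 * exp (u * t)"

lemma norm_csc3_exp_le:
  assumes "0 \<le> Re t" "1 \<le> \<bar>Im t\<bar>" "Re u \<le> 0" "\<bar>Im u\<bar> \<le> 3 * pi"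
  shows "norm (csc3_exp u t) \<le> 27 * pi ^ 3"
proof -
  define E where "E = exp (pi * \<bar>Im t\<bar>)"
  have "E > 0" unfolding E_def by simp
  have sin_ge: "E / 3 \<le> norm (sin (of_real pi * t))"
    using norm_sin_ge_exp_abs_Im[of "of_real pi * t"] assms(2) by (simp add: E_def abs_mult)
  have exp_le: "norm (exp (u * t)) \<le> E ^ 3"
  proof -
    have "Re (u * t) \<le> - Im u * Im t" using assms(1,3) by (simp add: mult_nonpos_nonneg)
    also have "\<dots> \<le> \<bar>Im u\<bar> * \<bar>Im t\<bar>" by (simp add: abs_mult[symmetric])
    also have "\<dots> \<le> 3 * (pi * \<bar>Im t\<bar>)"
      using mult_right_mono[OF assms(4), of "\<bar>Im t\<bar>"] by (simp add: mult.assoc)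
    finally show ?thesis by (simp add: E_def exp_of_nat_mult[symmetric])
  qed
  have "norm (csc3_exp u t) = pi ^ 3 / norm (sin (of_real pi * t)) ^ 3 * norm (exp (u * t))"
    by (simp add: csc3_exp_def norm_mult norm_power norm_divide power_divide)
  also have "\<dots> \<le> pi ^ 3 / (E / 3) ^ 3 * E ^ 3"
    using sin_ge exp_le \<open>E > 0\<close> by (intro mult_mono divide_left_mono power_mono mult_pos_pos zero_less_power) auto
  also have "\<dots> = 27 * pi ^ 3" using \<open>E > 0\<close> by (simp add: field_simps)
  finally show ?thesis .
qed

lemma norm_csc3_exp_i_pi_le:
  assumes "Re t = of_nat N + 1 / 2"
  shows "norm (csc3_exp (\<i> * of_real pi) t) \<le> 2 * pi ^ 3"
proof -
  define E where "E = exp (pi * Im t)"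
  define S where "S = norm (sin (of_real pi * t))"
  have "E > 0" unfolding E_def by simp
  have S: "S = (E + inverse E) / 2"
    unfolding S_def E_def using assms by (subst norm_sin_half_integer_line[of _ N]) auto
  have S1: "1 \<le> S" unfolding S using plus_inverse_ge_2[OF \<open>E > 0\<close>] by simp
  hence "S \<le> S ^ 3" by (simp add: power_increasing[of 1 3, simplified])
  moreover have "inverse E / 2 \<le> S" unfolding S using \<open>E > 0\<close> by simp
  ultimately have S3: "inverse E / 2 \<le> S ^ 3" by linarith
  have "norm (csc3_exp (\<i> * of_real pi) t) = pi ^ 3 / S ^ 3 * inverse E"
    unfolding csc3_exp_def S_def E_def by (simp add: norm_mult norm_power norm_divide power_divide exp_minus)
  also have "\<dots> \<le> pi ^ 3 / (inverse E / 2) * inverse E"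
    using S1 S3 \<open>E > 0\<close> by (intro mult_right_mono divide_left_mono) auto
  also have "\<dots> = 2 * pi ^ 3" using \<open>E > 0\<close> by simp
  finally show ?thesis .
qed

lemma csc3_exp_i_pi_eq:
  assumes "sin (of_real pi * t) \<noteq> 0"
  shows "csc3_exp (\<i> * of_real pi) t = cot_pi'' t / 2 - \<i> * of_real pi * cot_pi' t"
proof -
  have alg: "(p / s) ^ 3 * (c + \<i> * s) = 2 * p ^ 3 * c / s ^ 3 / 2 - \<i> * p * (- (p ^ 2) / s ^ 2)"
    if "s \<noteq> 0" for p s c :: complex
    using that by (simp add: field_simps power2_eq_square power3_eq_cube)
  have "exp (\<i> * of_real pi * t) = cos (of_real pi * t) + \<i> * sin (of_real pi * t)"
    using exp_Euler[of "of_real pi * t"] by (simp add: mult.assoc)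
  hence "csc3_exp (\<i> * of_real pi) t
      = (of_real pi / sin (of_real pi * t)) ^ 3 * (cos (of_real pi * t) + \<i> * sin (of_real pi * t))"
    by (simp add: csc3_exp_def)
  also have "\<dots> = cot_pi'' t / 2 - \<i> * of_real pi * cot_pi' t"
    unfolding cot_pi'_def cot_pi''_def by (rule alg[OF assms])
  finally show ?thesis .
qed

section \<open>The rational function R\<close>

lemma pochhammer_neq_0_if_Re_pos:
  fixes t :: complex
  assumes "0 < Re t"
  shows "pochhammer t m \<noteq> 0"
  using assms by (auto simp: pochhammer_eq_0_iff)

lemma R_holomorphic: "R a n holomorphic_on {t. 0 < Re t}"
  unfolding R_def by (intro holomorphic_intros) (auto dest: pochhammer_neq_0_if_Re_pos)

lemma norm_pochhammer_shift_le:
  fixes t s :: "'a::real_normed_field"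
  assumes "norm s + of_nat m \<le> C"
  shows "norm (pochhammer (t + s) m) \<le> (norm t + C) ^ m"
proof -
  have "norm (pochhammer (t + s) m) = (\<Prod>i<m. norm (t + s + of_nat i))"
    by (simp add: pochhammer_prod prod_norm atLeast0LessThan)
  also have "\<dots> \<le> (\<Prod>i<m. norm t + C)"
  proof (intro prod_mono conjI norm_ge_zero)
    fix i assume "i \<in> {..<m}"
    have "norm (t + s + of_nat i) \<le> norm t + norm s + of_nat i"
      by (metis norm_of_nat norm_triangle_mono norm_triangle_ineq order_refl)
    also have "\<dots> \<le> norm t + C" using \<open>i \<in> {..<m}\<close> assms by simp
    finally show "norm (t + s + of_nat i) \<le> norm t + C" .
  qed
  finally show ?thesis by simp
qed

lemma norm_pochhammer_ge:
  fixes t :: complex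
  assumes "0 \<le> Re t"
  shows "norm t ^ m \<le> norm (pochhammer t m)"
proof -
  have "norm t \<le> norm (t + of_nat i)" for i
    using assms by (simp add: cmod_def power2_eq_square algebra_simps)
  hence "(\<Prod>i<m. norm t) \<le> (\<Prod>i<m. norm (t + of_nat i))"
    by (intro prod_mono) auto
  thus ?thesis by (simp add: pochhammer_prod prod_norm atLeast0LessThan)
qed

lemma norm_R_le:
  assumes "0 < Re t"
  shows "norm (R a n t) \<le> fact n ^ (a - 6) * (norm t + (2 * n + 1)) ^ (6 * n + 1) / norm t ^ (a * (n + 1))"
proof -
  define C :: real where "C = 2 * n + 1"
  have "t \<noteq> 0" using assms by auto
  have num: "norm ((t + of_nat n / 2) * pochhammer (t - of_nat n) n ^ 3 * pochhammer (t + of_nat n + 1) n ^ 3)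
      \<le> (norm t + C) * ((norm t + C) ^ n) ^ 3 * ((norm t + C) ^ n) ^ 3"
  proof -
    have "norm (pochhammer (t + of_nat n / 2) 1) \<le> (norm t + C) ^ 1"
      by (intro norm_pochhammer_shift_le) (simp add: C_def norm_divide)
    moreover have "norm (pochhammer (t + - of_nat n) n) \<le> (norm t + C) ^ n"
      by (intro norm_pochhammer_shift_le) (simp add: C_def)
    moreover have "norm (pochhammer (t + (of_nat n + 1)) n) \<le> (norm t + C) ^ n"
      by (intro norm_pochhammer_shift_le) (simp add: C_def norm_add_rule_thm)
    ultimately show ?thesis
      unfolding norm_mult norm_power
      by (intro mult_mono power_mono) (auto simp: add_ac C_def)
  qed
  have den: "(norm t ^ (n + 1)) ^ a \<le> norm (pochhammer t (n + 1) ^ a)"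
    unfolding norm_power using assms by (intro power_mono norm_pochhammer_ge) auto
  have "norm (R a n t) = fact n ^ (a - 6) * norm ((t + of_nat n / 2) * pochhammer (t - of_nat n) n ^ 3
      * pochhammer (t + of_nat n + 1) n ^ 3) / norm (pochhammer t (n + 1) ^ a)"
    unfolding R_def by (simp add: norm_mult norm_divide norm_power)
  also have "\<dots> \<le> fact n ^ (a - 6) * ((norm t + C) * ((norm t + C) ^ n) ^ 3 * ((norm t + C) ^ n) ^ 3)
      / (norm t ^ (n + 1)) ^ a"
    using \<open>t \<noteq> 0\<close> by (intro frac_le mult_left_mono num den) (auto simp: C_def)
  also have "\<dots> = fact n ^ (a - 6) * (norm t + C) ^ (6 * n + 1) / norm t ^ (a * (n + 1))"
  proof -
    have "6 * n + 1 = 1 + n * 3 + n * 3" "a * (n + 1) = (n + 1) * a" by simp_all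
    thus ?thesis by (simp only: power_add power_mult power_one_right)
  qed
  finally show ?thesis unfolding C_def .
qed

lemma R_decay:
  assumes "0 < x0" "6 \<le> a"
  obtains D where "0 < D" "\<And>t. x0 \<le> Re t \<Longrightarrow> norm (R a n t) \<le> D / norm t ^ 2"
proof
  define \<beta> :: real where "\<beta> = 1 + (2 * n + 1) / x0"
  define m where "m = a * (n + 1) - (6 * n + 3)"
  have exps: "a * (n + 1) = (6 * n + 1) + 2 + m"
  proof -
    have "6 * (n + 1) \<le> a * (n + 1)" using assms(2) by (rule mult_le_mono1)
    thus ?thesis unfolding m_def by simp
  qed
  show "0 < fact n ^ (a - 6) * \<beta> ^ (6 * n + 1) / x0 ^ m"
    using assms(1) by (simp add: \<beta>_def add_pos_nonneg)
  fix t assume t: "x0 \<le> Re t"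
  have x0t: "x0 \<le> norm t" using t complex_Re_le_cmod order_trans by blast
  have "norm t + (2 * n + 1) \<le> \<beta> * norm t"
  proof -
    have "(2 * n + 1) / x0 * x0 \<le> (2 * n + 1) / x0 * norm t"
      using x0t assms(1) by (intro mult_left_mono) auto
    hence "2 * n + 1 \<le> (2 * n + 1) / x0 * norm t" using assms(1) by simp
    thus ?thesis unfolding \<beta>_def distrib_right by simp
  qed
  hence pow: "(norm t + (2 * n + 1)) ^ (6 * n + 1) \<le> \<beta> ^ (6 * n + 1) * norm t ^ (6 * n + 1)"
    by (metis power_mono power_mult_distrib add_nonneg_nonneg norm_ge_zero of_nat_0_le_iff)
  have "norm (R a n t) \<le> fact n ^ (a - 6) * (norm t + (2 * n + 1)) ^ (6 * n + 1) / norm t ^ (a * (n + 1))"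
    using t assms(1) by (intro norm_R_le) simp
  also have "\<dots> \<le> fact n ^ (a - 6) * (\<beta> ^ (6 * n + 1) * norm t ^ (6 * n + 1)) / norm t ^ (a * (n + 1))"
    by (intro divide_right_mono mult_left_mono pow) simp_all
  also have "norm t ^ (a * (n + 1)) = norm t ^ (6 * n + 1) * (norm t ^ 2 * norm t ^ m)"
    unfolding exps power_add by simp
  also have "fact n ^ (a - 6) * (\<beta> ^ (6 * n + 1) * norm t ^ (6 * n + 1))
      / (norm t ^ (6 * n + 1) * (norm t ^ 2 * norm t ^ m))
      = fact n ^ (a - 6) * \<beta> ^ (6 * n + 1) / (norm t ^ 2 * norm t ^ m)"
    using assms(1) x0t by simp
  also have "\<dots> \<le> fact n ^ (a - 6) * \<beta> ^ (6 * n + 1) / (norm t ^ 2 * x0 ^ m)"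
    using assms(1) x0t by (intro divide_left_mono mult_left_mono mult_pos_pos power_mono zero_less_power)
      (auto simp: \<beta>_def add_pos_nonneg)
  finally show "norm (R a n t) \<le> fact n ^ (a - 6) * \<beta> ^ (6 * n + 1) / x0 ^ m / norm t ^ 2"
    by (simp add: field_simps)
qed

lemma R_triple_zero:
  assumes "1 \<le> k" "k \<le> n"
  obtains r where "r holomorphic_on {t. 0 < Re t}" "\<And>t. R a n t = (t - of_nat k) ^ 3 * r t"
proof
  define P where "P t = (\<Prod>i\<in>{..<n} - {n - k}. t - of_nat n + of_nat i)" for t :: complex
  have poch: "pochhammer (t - of_nat n) n = (t - of_nat k) * P t" for t
  proof -
    have "pochhammer (t - of_nat n) n = (\<Prod>i<n. t - of_nat n + of_nat i)"
      by (simp add: pochhammer_prod atLeast0LessThan)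
    also have "\<dots> = (t - of_nat n + of_nat (n - k)) * P t"
      unfolding P_def using assms by (intro prod.remove) auto
    finally show ?thesis using assms by (simp add: of_nat_diff)
  qed
  define r where "r t = fact n ^ (a - 6) * (t + of_nat n / 2) * P t ^ 3
      * pochhammer (t + of_nat n + 1) n ^ 3 / pochhammer t (n + 1) ^ a" for t :: complex
  show "r holomorphic_on {t. 0 < Re t}"
    unfolding r_def P_def by (intro holomorphic_intros) (auto dest: pochhammer_neq_0_if_Re_pos)
  show "R a n t = (t - of_nat k) ^ 3 * r t" for t
    unfolding R_def r_def poch by (simp add: power_mult_distrib)
qed

lemma R_of_real: "R a n (of_real y) = of_real (Rr a n y)"
  unfolding R_def Rr_def by (simp add: pochhammer_of_real[symmetric])

lemma deriv_R_of_real: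
  assumes "0 < x"
  shows "deriv (R a n) (of_real x) = of_real (deriv (Rr a n) x)"
    "deriv (deriv (R a n)) (of_real x) = of_real (deriv (deriv (Rr a n)) x)"
proof -
  have open_Re: "open {t::complex. 0 < Re t}" by (rule open_halfspace_Re_gt)
  have R': "(R a n has_field_derivative deriv (R a n) t) (at t)"
    and R'': "(deriv (R a n) has_field_derivative deriv (deriv (R a n)) t) (at t)" if "0 < Re t" for t
    using that open_Re holomorphic_deriv[OF R_holomorphic open_Re]
    by (auto intro!: holomorphic_derivI[OF R_holomorphic] holomorphic_derivI[of "deriv (R a n)"])
  have first: "deriv (R a n) (of_real y) = of_real (deriv (Rr a n) y)" if "0 < y" for y
  proof -
    note transfer = has_real_derivative_of_complex[OF R'[of "of_real y"], of "Rr a n"]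
    have "deriv (Rr a n) y = Re (deriv (R a n) (of_real y))"
      using that transfer(1) by (simp add: R_of_real DERIV_imp_deriv)
    thus ?thesis using that transfer(2) by (simp add: R_of_real complex_eq_iff)
  qed
  thus "deriv (R a n) (of_real x) = of_real (deriv (Rr a n) x)" using assms .
  have "eventually (\<lambda>y. deriv (R a n) (of_real y) = of_real (deriv (Rr a n) y)) (nhds x)"
  proof -
    have "eventually (\<lambda>y. y \<in> {0<..}) (nhds x)" using assms by (intro eventually_nhds_in_open) auto
    thus ?thesis by (rule eventually_mono) (simp add: first)
  qed
  note transfer = has_real_derivative_of_complex[OF R''[of "of_real x"] this]
  have "deriv (deriv (Rr a n)) x = Re (deriv (deriv (R a n)) (of_real x))"
    using assms transfer(1) by (simp add: DERIV_imp_deriv)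
  thus "deriv (deriv (R a n)) (of_real x) = of_real (deriv (deriv (Rr a n)) x)"
    using assms transfer(2) by (simp add: complex_eq_iff)
qed

lemma R_mult_pi_csc_cube_eq_Gamma:
  fixes t :: complex
  assumes "t \<notin> \<int>"
  shows "R a n t * (of_real pi / sin (of_real pi * t)) ^ 3
    = (-1) ^ n * fact n ^ (a - 6) * (t + of_nat n / 2) * Gamma t ^ (a + 3)
      * Gamma (of_nat n - t + 1) ^ 3 * Gamma (t + 2 * of_nat n + 1) ^ 3 / Gamma (t + of_nat n + 1) ^ (a + 3)"
proof -
  have "1 - t \<notin> \<int>" using assms Ints_diff[of 1 "1 - t"] by auto
  moreover have "t + of_nat n + 1 \<notin> \<int>"
    using assms Ints_diff[of "t + of_nat n + 1" "of_nat n + 1"] by auto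
  ultimately have nonpos: "t \<notin> \<int>\<^sub>\<le>\<^sub>0" "1 - t \<notin> \<int>\<^sub>\<le>\<^sub>0" "t + of_nat n + 1 \<notin> \<int>\<^sub>\<le>\<^sub>0"
    using assms nonpos_Ints_subset_Ints by auto
  hence Gamma_nz: "Gamma t \<noteq> 0" "Gamma (1 - t) \<noteq> 0" "Gamma (t + of_nat n + 1) \<noteq> 0"
    by (simp_all add: Gamma_eq_zero_iff)
  have p1: "pochhammer t (n + 1) = Gamma (t + of_nat n + 1) / Gamma t"
    using pochhammer_Gamma[OF nonpos(1), of "n + 1"] by (simp only: of_nat_add of_nat_1 add.assoc)
  have p2: "pochhammer (t + of_nat n + 1) n = Gamma (t + 2 * of_nat n + 1) / Gamma (t + of_nat n + 1)"
    using pochhammer_Gamma[OF nonpos(3), of n] by (simp add: algebra_simps)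
  have "pochhammer (t - of_nat n) n = (-1) ^ n * pochhammer (1 - t) n"
    using pochhammer_minus[of "of_nat n - t" n] by simp
  hence p3: "pochhammer (t - of_nat n) n = (-1) ^ n * (Gamma (of_nat n - t + 1) / Gamma (1 - t))"
    using pochhammer_Gamma[OF nonpos(2), of n] by (simp add: algebra_simps)
  have alg: "F * s * (\<sigma> * (C / B)) ^ 3 * (D / E) ^ 3 / (Y / X) * (A * B) ^ 3
      = \<sigma> ^ 3 * F * s * (X * A ^ 3) * C ^ 3 * D ^ 3 / (Y * E ^ 3)"
    if "B \<noteq> 0" "E \<noteq> 0" "X \<noteq> 0" "Y \<noteq> 0" for F s \<sigma> A B C D E X Y :: complex
    using that by (simp add: field_simps power_mult_distrib)
  have sign: "((-1::complex) ^ n) ^ 3 = (-1) ^ n"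
    by (cases "even n") (auto simp: power_mult[symmetric] mult.commute[of n])
  show ?thesis
    unfolding R_def p1 p2 p3 Gamma_reflection_complex[symmetric] power_divide[of _ _ a]
    using alg[of "Gamma (1 - t)" "Gamma (t + of_nat n + 1)" "Gamma t ^ a" "Gamma (t + of_nat n + 1) ^ a"] Gamma_nz
    by (simp add: sign power_add)
qed

section \<open>The integrand in the variable t = n z\<close>

(* At the integers J_kernel takes the junk value 0 (division by sin(pi t) = 0); remove_sings (J_kernel a n u)
   is its continuous extension across the removable singularities at 1, ..., n. *)
definition J_kernel :: "nat \<Rightarrow> nat \<Rightarrow> complex \<Rightarrow> complex \<Rightarrow> complex" where
  "J_kernel a n u t = R a n t * csc3_exp u t"

lemma J_integrand_eq_J_kernel: "J_integrand a n u z = J_kernel a n u (of_nat n * z)"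
  unfolding J_integrand_def J_kernel_def csc3_exp_def by (simp add: mult_ac)

lemma J_integrand_eq_Gamma:
  assumes "of_nat n * z \<notin> \<int>"
  shows "J_integrand a n u z = (-1) ^ n * of_nat n * fact n ^ (a - 6) * ((z + 1/2) * Gamma (of_nat n * z) ^ (a + 3)
    * Gamma (of_nat n - of_nat n * z + 1) ^ 3 * Gamma (of_nat n * z + 2 * of_nat n + 1) ^ 3
    / Gamma (of_nat n * z + of_nat n + 1) ^ (a + 3) * exp (of_nat n * u * z))"
proof -
  have "J_integrand a n u z = R a n (of_nat n * z) * (of_real pi / sin (of_real pi * (of_nat n * z))) ^ 3
      * exp (of_nat n * u * z)"
    by (simp add: J_integrand_def mult_ac)
  also note R_mult_pi_csc_cube_eq_Gamma[OF assms]
  also have "of_nat n * z + of_nat n / 2 = of_nat n * (z + 1/2)" by (simp add: algebra_simps)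
  finally show ?thesis by (simp only: mult_ac times_divide_eq_left times_divide_eq_right)
qed

lemma J_kernel_holomorphic: "J_kernel a n u holomorphic_on {t. 0 < Re t} - \<int>"
proof -
  have "R a n holomorphic_on {t. 0 < Re t} - \<int>" by (rule holomorphic_on_subset[OF R_holomorphic]) auto
  thus ?thesis unfolding J_kernel_def csc3_exp_def by (intro holomorphic_intros) (auto dest: sin_pi_neq_0)
qed

lemma J_kernel_analytic: "J_kernel a n u analytic_on {t. 0 < Re t} - \<int>"
proof -
  have "open ({t. 0 < Re t} - \<int>)" by (intro open_Diff open_halfspace_Re_gt closed_Ints)
  thus ?thesis by (simp add: analytic_on_open J_kernel_holomorphic)
qed

lemma J_kernel_tendsto_at_zero_of_R:
  assumes "1 \<le> k" "k \<le> n"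
  obtains L where "(J_kernel a n u \<longlongrightarrow> L) (at (of_nat k))"
proof -
  obtain r where r: "r holomorphic_on {t. 0 < Re t}" "\<And>t. R a n t = (t - of_nat k) ^ 3 * r t"
    using R_triple_zero[OF assms] by blast
  have eq: "J_kernel a n u t = r t * (of_real pi * ((t - of_nat k) / sin (of_real pi * t))) ^ 3 * exp (u * t)" for t
    by (cases "sin (of_real pi * t) = 0")
       (simp_all add: J_kernel_def csc3_exp_def r(2) power_mult_distrib power_divide ac_simps)
  have "isCont r (of_nat k)"
    using assms r(1) by (intro holomorphic_on_imp_continuous_on[THEN continuous_on_interior])
      (auto simp: interior_open open_halfspace_Re_gt)
  hence "((\<lambda>t. r t * (of_real pi * ((t - of_nat k) / sin (of_real pi * t))) ^ 3 * exp (u * t))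
      \<longlongrightarrow> r (of_nat k) * (of_real pi * ((-1) ^ k / of_real pi)) ^ 3 * exp (u * of_nat k)) (at (of_nat k))"
    by (intro tendsto_intros tendsto_sub_div_sin_pi) (auto simp: isCont_def)
  thus ?thesis using that unfolding eq[abs_def] by blast
qed

lemma remove_sings_J_kernel_eq:
  assumes "t \<in> {t. 0 < Re t} - \<int>"
  shows "remove_sings (J_kernel a n u) t = J_kernel a n u t"
  by (rule remove_sings_at_analytic, rule analytic_on_subset[OF J_kernel_analytic]) (use assms in simp)

lemma remove_sings_J_kernel_eq_off_axis:
  assumes "0 < Re t" "Im t \<noteq> 0"
  shows "remove_sings (J_kernel a n u) t = J_kernel a n u t"
  using assms by (intro remove_sings_J_kernel_eq) (simp add: complex_is_Int_iff)

lemma remove_sings_J_kernel_analytic: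
  "remove_sings (J_kernel a n u) analytic_on {t. 0 < Re t} - of_nat ` {n<..}"
proof (rule analytic_on_analytic_at[THEN iffD2], rule ballI)
  fix t assume "t \<in> {t. 0 < Re t} - of_nat ` {n<..}"
  hence t: "0 < Re t" "t \<notin> of_nat ` {n<..}" by simp_all
  show "remove_sings (J_kernel a n u) analytic_on {t}"
  proof (cases "t \<in> \<int>")
    case False
    have "{t} \<subseteq> {t. 0 < Re t} - \<int>" using t(1) False by simp
    with remove_sings_analytic_on[OF J_kernel_analytic] show ?thesis by (rule analytic_on_subset)
  next
    case True
    then obtain m where m: "t = of_int m" by (auto elim: Ints_cases)
    define k where "k = nat m"
    have "0 < m" using t m by simp
    hence k: "t = of_nat k" "1 \<le> k" using m by (simp_all add: k_def)
    have "k \<le> n"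
    proof (rule ccontr, rule notE[OF t(2)])
      assume "\<not> k \<le> n"
      thus "t \<in> of_nat ` {n<..}" using k(1) by (intro image_eqI[of t of_nat k]) auto
    qed
    obtain L where "(J_kernel a n u \<longlongrightarrow> L) (at (of_nat k))"
      using J_kernel_tendsto_at_zero_of_R[OF k(2) \<open>k \<le> n\<close>] .
    moreover have "J_kernel a n u holomorphic_on ball (of_nat k) 1 - {of_nat k}"
      by (rule holomorphic_on_subset[OF J_kernel_holomorphic punctured_ball_of_nat_subset[OF k(2)]])
    hence "isolated_singularity_at (J_kernel a n u) (of_nat k)"
      by (rule isolated_singularity_at_holomorphic) simp_all
    ultimately show ?thesis unfolding k(1) by (intro remove_sings_analytic_at)
  qed
qed

lemma residue_remove_sings_J_kernel_eq_0:
  assumes "1 \<le> k" "k \<le> n"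
  shows "residue (remove_sings (J_kernel a n u)) (of_nat k) = 0"
proof -
  have "remove_sings (J_kernel a n u) analytic_on {of_nat k}"
    using assms by (intro analytic_on_subset[OF remove_sings_J_kernel_analytic]) auto
  then obtain S where "open S" "of_nat k \<in> S" "remove_sings (J_kernel a n u) holomorphic_on S"
    unfolding analytic_at by blast
  thus ?thesis by (intro residue_holo)
qed

lemma remove_sings_J_kernel_i_pi_eq:
  assumes "1 \<le> k" "t \<in> ball (of_nat k) 1 - {of_nat k}"
  shows "remove_sings (J_kernel a n (\<i> * of_real pi)) t
    = R a n t * cot_pi'' t / 2 - \<i> * of_real pi * (R a n t * cot_pi' t)"
proof -
  have "remove_sings (J_kernel a n (\<i> * of_real pi)) t = R a n t * csc3_exp (\<i> * of_real pi) t"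
    using assms punctured_ball_of_nat_subset[OF assms(1)]
    by (auto simp: remove_sings_J_kernel_eq J_kernel_def)
  thus ?thesis
    using sin_pi_neq_0_punctured_ball[OF assms(2)]
    by (simp add: csc3_exp_i_pi_eq right_diff_distrib mult.left_commute)
qed

lemma residue_J_kernel_i_pi:
  assumes "1 \<le> k"
  shows "residue (remove_sings (J_kernel a n (\<i> * of_real pi))) (of_nat k)
    = deriv (deriv (R a n)) (of_nat k) / 2 + \<i> * of_real pi * deriv (R a n) (of_nat k)"
proof -
  define U where "U = ball (of_nat k :: complex) 1"
  have R: "R a n holomorphic_on U"
    unfolding U_def by (rule holomorphic_on_subset[OF R_holomorphic ball_of_nat_subset_Re_pos[OF assms]])
  have holo: "(\<lambda>t. R a n t * cot_pi'' t) holomorphic_on U - {of_nat k}"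
    "(\<lambda>t. R a n t * cot_pi' t) holomorphic_on U - {of_nat k}"
    unfolding cot_pi'_def cot_pi''_def
    by (intro holomorphic_intros holomorphic_on_subset[OF R];
        use sin_pi_neq_0_punctured_ball in \<open>force simp: U_def\<close>)+
  have "eventually (\<lambda>t. remove_sings (J_kernel a n (\<i> * of_real pi)) t
      = R a n t * cot_pi'' t / 2 - \<i> * of_real pi * (R a n t * cot_pi' t)) (at (of_nat k))"
    using eventually_at_in_open[of U "of_nat k"] unfolding U_def
    by (auto elim!: eventually_mono intro: remove_sings_J_kernel_i_pi_eq[OF assms])
  hence "residue (remove_sings (J_kernel a n (\<i> * of_real pi))) (of_nat k)
      = residue (\<lambda>t. R a n t * cot_pi'' t / 2 - \<i> * of_real pi * (R a n t * cot_pi' t)) (of_nat k)"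
    by (rule residue_cong) (rule refl)
  also have "\<dots> = residue (\<lambda>t. R a n t * cot_pi'' t) (of_nat k) / 2
      - \<i> * of_real pi * residue (\<lambda>t. R a n t * cot_pi' t) (of_nat k)"
  proof -
    have U: "open U" "of_nat k \<in> U" by (simp_all add: U_def)
    have "(\<lambda>t. R a n t * cot_pi'' t / 2) holomorphic_on U - {of_nat k}"
      "(\<lambda>t. \<i> * of_real pi * (R a n t * cot_pi' t)) holomorphic_on U - {of_nat k}"
      by (rule holomorphic_on_divide[OF holo(1) holomorphic_on_const], simp)
        (rule holomorphic_on_mult[OF holomorphic_on_const holo(2)])
    thus ?thesis by (simp only: residue_diff[OF U] residue_div[OF U holo(1)] residue_lmul[OF U holo(2)])
  qed
  also have "\<dots> = deriv (deriv (R a n)) (of_nat k) / 2 + \<i> * of_real pi * deriv (R a n) (of_nat k)"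
    using R unfolding U_def by (simp add: residue_mult_cot_pi' residue_mult_cot_pi'')
  finally show ?thesis .
qed

lemma norm_J_kernel_le:
  assumes "norm (R a n t) \<le> D / norm t ^ 2" "0 \<le> D" "norm (csc3_exp u t) \<le> 27 * pi ^ 3"
  shows "norm (J_kernel a n u t) \<le> 27 * pi ^ 3 * D / norm t ^ 2"
proof -
  have "norm (J_kernel a n u t) \<le> D / norm t ^ 2 * (27 * pi ^ 3)"
    unfolding J_kernel_def norm_mult using assms by (intro mult_mono) auto
  thus ?thesis by (simp add: ac_simps)
qed

section \<open>The vertical line integral\<close>

lemma continuous_on_remove_sings_J_kernel_vline:
  assumes "0 < x0" "x0 < of_nat n + 1"
  shows "continuous_on UNIV (\<lambda>s. remove_sings (J_kernel a n u) (Complex x0 s))"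
proof -
  have "{t. 0 < Re t \<and> Re t < of_nat n + 1} \<subseteq> {t. 0 < Re t} - of_nat ` {n<..}" by auto
  hence "remove_sings (J_kernel a n u) holomorphic_on {t. 0 < Re t \<and> Re t < of_nat n + 1}"
    by (rule analytic_imp_holomorphic[OF analytic_on_subset[OF remove_sings_J_kernel_analytic]])
  hence "continuous_on {t. 0 < Re t \<and> Re t < of_nat n + 1} (remove_sings (J_kernel a n u))"
    by (rule holomorphic_on_imp_continuous_on)
  moreover have "continuous_on UNIV (\<lambda>s. Complex x0 s)"
    unfolding Complex_eq by (intro continuous_intros)
  ultimately show ?thesis
    by (rule continuous_on_compose2) (use assms in auto)
qed

lemma norm_remove_sings_J_kernel_vline_le:
  assumes "0 < x0" "Re u \<le> 0" "\<bar>Im u\<bar> \<le> 3 * pi" "1 \<le> \<bar>s\<bar>"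
    and D: "0 \<le> D" "\<And>t. x0 \<le> Re t \<Longrightarrow> norm (R a n t) \<le> D / norm t ^ 2"
  shows "norm (remove_sings (J_kernel a n u) (Complex x0 s)) \<le> 27 * pi ^ 3 * D / s ^ 2"
proof -
  have "norm (remove_sings (J_kernel a n u) (Complex x0 s)) \<le> 27 * pi ^ 3 * D / norm (Complex x0 s) ^ 2"
    using assms by (subst remove_sings_J_kernel_eq_off_axis) (auto intro!: norm_J_kernel_le norm_csc3_exp_le)
  also have "\<dots> \<le> 27 * pi ^ 3 * D / s ^ 2"
    using assms(4) D(1) by (intro divide_left_mono mult_pos_pos) (auto simp: cmod_power2 add_nonneg_pos)
  finally show ?thesis .
qed

lemma vline_integral_J_integrand:
  assumes "6 \<le> a" "1 \<le> n" "Re u \<le> 0" "\<bar>Im u\<bar> \<le> 3 * pi" "0 < c" "c < 1"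
  defines "g \<equiv> \<lambda>s. remove_sings (J_kernel a n u) (Complex (real n * c) s)"
  shows "integrable lborel g" "(\<lambda>y. J_integrand a n u (Complex c (- y))) integrable_on UNIV"
    "vline_integral c (J_integrand a n u) = - \<i> * integral UNIV g / of_nat n"
proof -
  define x0 where "x0 = real n * c"
  have "0 < x0" "x0 < real n" using assms(2,5,6) by (simp_all add: x0_def)
  obtain D where D: "0 < D" "\<And>t. x0 \<le> Re t \<Longrightarrow> norm (R a n t) \<le> D / norm t ^ 2"
    using R_decay[OF \<open>0 < x0\<close> assms(1)] by blast
  have "norm (g s) \<le> 27 * pi ^ 3 * D / s ^ 2" if "1 \<le> \<bar>s\<bar>" for s
    unfolding g_def x0_def[symmetric] using \<open>0 < x0\<close> assms(3,4) D that
    by (intro norm_remove_sings_J_kernel_vline_le) auto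
  moreover have "continuous_on UNIV g"
    unfolding g_def x0_def[symmetric] using \<open>0 < x0\<close> \<open>x0 < real n\<close>
    by (intro continuous_on_remove_sings_J_kernel_vline) auto
  ultimately show g: "integrable lborel g"
    by (intro integrable_lborel_continuous_inverse_square_decay)
  have eq: "J_integrand a n u (Complex c (- y)) = g (- real n * y)" if "y \<in> UNIV - {0}" for y
  proof -
    have "of_nat n * Complex c (- y) = Complex x0 (- real n * y)"
      by (simp add: complex_eq_iff x0_def)
    thus ?thesis
      using that assms(2) \<open>0 < x0\<close> unfolding J_integrand_eq_J_kernel g_def x0_def[symmetric]
      by (simp add: remove_sings_J_kernel_eq_off_axis)
  qed
  have "- real n \<noteq> 0" using assms(2) by simp
  note stretch = integral_UNIV_stretch[OF g this]
  show "(\<lambda>y. J_integrand a n u (Complex c (- y))) integrable_on UNIV"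
    by (rule integrable_spike[OF stretch(1) negligible_sing[of 0] eq])
  have "vline_integral c (J_integrand a n u) = integral UNIV (\<lambda>y. g (- real n * y)) * (- \<i>)"
    unfolding vline_integral_def integral_mult_left[symmetric]
    by (rule integral_spike[OF negligible_sing[of 0]]) (simp add: eq)
  also have "\<dots> = integral UNIV g /\<^sub>R real n * (- \<i>)"
    unfolding stretch(2) by simp
  also have "\<dots> = - \<i> * integral UNIV g / of_nat n"
    by (simp add: scaleR_conv_of_real field_simps)
  finally show "vline_integral c (J_integrand a n u) = - \<i> * integral UNIV g / of_nat n" .
qed

lemma J_eq_Gamma_vline_integral:
  assumes "1 \<le> n"
  shows "J a n c u = (-1) ^ n * (of_nat n) ^ 2 / (2 * \<i> * of_real pi) * (fact n) ^ (a - 6)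
    * vline_integral c (\<lambda>z. (z + 1/2) * Gamma (of_nat n * z) ^ (a + 3)
         * Gamma (of_nat n - of_nat n * z + 1) ^ 3 * Gamma (of_nat n * z + 2 * of_nat n + 1) ^ 3
         / Gamma (of_nat n * z + of_nat n + 1) ^ (a + 3) * exp (of_nat n * u * z))"
proof -
  define G where "G z = (z + 1/2) * Gamma (of_nat n * z) ^ (a + 3)
    * Gamma (of_nat n - of_nat n * z + 1) ^ 3 * Gamma (of_nat n * z + 2 * of_nat n + 1) ^ 3
    / Gamma (of_nat n * z + of_nat n + 1) ^ (a + 3) * exp (of_nat n * u * z)" for z
  define \<kappa> :: complex where "\<kappa> = (-1) ^ n * of_nat n * fact n ^ (a - 6)"
  have "vline_integral c (J_integrand a n u) = integral UNIV (\<lambda>y. \<kappa> * (G (Complex c (- y)) * - \<i>))"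
    unfolding vline_integral_def
  proof (rule integral_spike[OF negligible_sing[of 0]])
    fix y :: real assume "y \<in> UNIV - {0}"
    hence "of_nat n * Complex c (- y) \<notin> \<int>" using assms by (simp add: complex_is_Int_iff)
    hence "J_integrand a n u (Complex c (- y)) = \<kappa> * G (Complex c (- y))"
      unfolding \<kappa>_def G_def by (rule J_integrand_eq_Gamma)
    thus "\<kappa> * (G (Complex c (- y)) * - \<i>) = J_integrand a n u (Complex c (- y)) * - \<i>" by simp
  qed
  also have "\<dots> = \<kappa> * vline_integral c G" unfolding vline_integral_def by simp
  finally show ?thesis unfolding J_def G_def[symmetric] \<kappa>_def by (simp add: power2_eq_square)
qed

section \<open>Shifting the line of integration to the right\<close>

lemma path_image_rectpath_subset_strip:
  assumes "0 < x0" "x0 < real n" "n \<le> N"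
  shows "path_image (rectpath (Complex x0 (- real N)) (Complex (real N + 1/2) (real N)))
    \<subseteq> {t. 0 < Re t \<and> Re t < real N + 1} - of_nat ` {n<..N}"
    (is "path_image (rectpath ?a1 ?a3) \<subseteq> _")
proof
  fix t assume t: "t \<in> path_image (rectpath ?a1 ?a3)"
  have le: "Re ?a1 \<le> Re ?a3" "Im ?a1 \<le> Im ?a3" using assms by auto
  have "t \<notin> of_nat ` {n<..N}"
  proof
    assume "t \<in> of_nat ` {n<..N}"
    then obtain k where k: "n < k" "k \<le> N" "t = of_nat k" by auto
    have "real k \<noteq> real N + 1/2"
    proof
      assume "real k = real N + 1/2"
      hence "2 * k = 2 * N + 1" by linarith
      thus False by presburger
    qed
    thus False using t k assms unfolding path_image_rectpath[OF le] by auto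
  qed
  moreover have "t \<in> cbox ?a1 ?a3" using t path_image_rectpath_subset_cbox[OF le] by blast
  ultimately show "t \<in> {t. 0 < Re t \<and> Re t < real N + 1} - of_nat ` {n<..N}"
    using assms by (auto simp: in_cbox_complex_iff)
qed

lemma remove_sings_J_kernel_holomorphic_strip:
  "remove_sings (J_kernel a n u) holomorphic_on {t. 0 < Re t \<and> Re t < real N + 1} - of_nat ` {n<..N}"
proof -
  have "{t. 0 < Re t \<and> Re t < real N + 1} - of_nat ` {n<..N} \<subseteq> {t. 0 < Re t} - of_nat ` {n<..}"
    by auto
  thus ?thesis by (rule analytic_imp_holomorphic[OF analytic_on_subset[OF remove_sings_J_kernel_analytic]])
qed

lemma contour_integral_rectpath_J_kernel:
  assumes "0 < x0" "x0 < real n" "n \<le> N"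
  shows "contour_integral (rectpath (Complex x0 (- real N)) (Complex (real N + 1/2) (real N)))
      (remove_sings (J_kernel a n u))
    = 2 * pi * \<i> * (\<Sum>k\<in>{n<..N}. residue (remove_sings (J_kernel a n u)) (of_nat k))"
proof -
  define a1 a3 where "a1 = Complex x0 (- real N)" and "a3 = Complex (real N + 1/2) (real N)"
  define S where "S = {t. 0 < Re t \<and> Re t < real N + 1}"
  define pts :: "complex set" where "pts = of_nat ` {n<..N}"
  have le: "Re a1 \<le> Re a3" "Im a1 \<le> Im a3" using assms by (auto simp: a1_def a3_def)
  have cbox: "cbox a1 a3 \<subseteq> S" using assms by (auto simp: S_def a1_def a3_def in_cbox_complex_iff)
  have "open S" unfolding S_def
    by (auto simp: Collect_conj_eq intro!: open_Int open_halfspace_Re_gt open_halfspace_Re_lt)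
  moreover have "connected S" unfolding S_def
    by (auto simp: Collect_conj_eq intro!: convex_connected convex_Int convex_halfspace_Re_gt convex_halfspace_Re_lt)
  moreover have "\<forall>z. z \<notin> S \<longrightarrow> winding_number (rectpath a1 a3) z = 0"
    using winding_number_rectpath_outside[OF le] cbox by blast
  ultimately have "contour_integral (rectpath a1 a3) (remove_sings (J_kernel a n u))
      = 2 * pi * \<i> * (\<Sum>p\<in>pts. winding_number (rectpath a1 a3) p * residue (remove_sings (J_kernel a n u)) p)"
    using remove_sings_J_kernel_holomorphic_strip path_image_rectpath_subset_strip[OF assms]
    by (intro Residue_theorem) (auto simp: S_def pts_def a1_def a3_def)
  also have "\<dots> = 2 * pi * \<i> * (\<Sum>p\<in>pts. residue (remove_sings (J_kernel a n u)) p)"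
  proof (intro arg_cong[where f = "\<lambda>x. 2 * pi * \<i> * x"] sum.cong refl)
    fix p assume "p \<in> pts"
    hence "p \<in> box a1 a3" using assms by (auto simp: pts_def in_box_complex_iff a1_def a3_def)
    thus "winding_number (rectpath a1 a3) p * residue (remove_sings (J_kernel a n u)) p
        = residue (remove_sings (J_kernel a n u)) p"
      by (simp add: winding_number_rectpath)
  qed
  also have "(\<Sum>p\<in>pts. residue (remove_sings (J_kernel a n u)) p)
      = (\<Sum>k\<in>{n<..N}. residue (remove_sings (J_kernel a n u)) (of_nat k))"
    unfolding pts_def by (rule sum.reindex_cong[of of_nat]) (auto simp: inj_on_def)
  finally show ?thesis unfolding a1_def a3_def .
qed

lemma norm_J_kernel_i_pi_on_rectpath:
  assumes "0 < x0" "x0 < real n" "n \<le> N"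
    and D: "\<And>t. x0 \<le> Re t \<Longrightarrow> norm (R a n t) \<le> D / norm t ^ 2" "0 \<le> D"
    and t: "t \<in> path_image (rectpath (Complex x0 (- real N)) (Complex (real N + 1/2) (real N)))"
      "Re t = real N + 1/2 \<or> Im t = - real N \<or> Im t = real N"
  shows "norm (remove_sings (J_kernel a n (\<i> * of_real pi)) t) \<le> 27 * pi ^ 3 * D / real N ^ 2"
proof -
  have "0 < real n" using assms(1,2) by linarith
  hence "1 \<le> N" using assms(3) by simp
  have "x0 \<le> Re t" "Re t \<le> real N + 1/2"
    using t(1) path_image_rectpath_subset_cbox[of "Complex x0 (- real N)" "Complex (real N + 1/2) (real N)"]
      assms(1-3) by (auto simp: in_cbox_complex_iff)
  have "t \<notin> \<int>"
  proof
    assume "t \<in> \<int>"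
    then obtain m where "Im t = 0" "Re t = of_int m" by (auto simp: complex_is_Int_iff)
    hence "real_of_int (2 * m) = real (2 * N + 1)" using t(2) \<open>1 \<le> N\<close> by auto
    hence "2 * m = int (2 * N + 1)" by linarith
    thus False by presburger
  qed
  have "real N \<le> norm t"
    using t(2) abs_Im_le_cmod[of t] complex_Re_le_cmod[of t] by auto
  have "norm (csc3_exp (\<i> * of_real pi) t) \<le> 27 * pi ^ 3"
  proof (cases "Re t = real N + 1/2")
    case True
    thus ?thesis using norm_csc3_exp_i_pi_le[OF True] zero_less_power[OF pi_gt_zero, of 3] by linarith
  next
    case False
    thus ?thesis using t(2) \<open>1 \<le> N\<close> \<open>x0 \<le> Re t\<close> \<open>0 < x0\<close> by (intro norm_csc3_exp_le) auto
  qed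
  hence "norm (J_kernel a n (\<i> * of_real pi) t) \<le> 27 * pi ^ 3 * D / norm t ^ 2"
    using D \<open>x0 \<le> Re t\<close> by (intro norm_J_kernel_le) auto
  also have "\<dots> \<le> 27 * pi ^ 3 * D / real N ^ 2"
    using \<open>real N \<le> norm t\<close> \<open>1 \<le> N\<close> D(2) by (intro divide_left_mono power_mono mult_pos_pos) auto
  finally show ?thesis
    using \<open>t \<notin> \<int>\<close> \<open>x0 \<le> Re t\<close> \<open>0 < x0\<close> by (simp add: remove_sings_J_kernel_eq)
qed

lemma norm_sum_residues_add_vline_integral_le:
  assumes x0: "0 < x0" "x0 < real n" and "n \<le> N"
    and D: "0 < D" "\<And>t. x0 \<le> Re t \<Longrightarrow> norm (R a n t) \<le> D / norm t ^ 2"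
  defines "F \<equiv> remove_sings (J_kernel a n (\<i> * of_real pi))"
  shows "norm (2 * pi * \<i> * (\<Sum>k\<in>{n<..N}. residue F (of_nat k))
      + \<i> * integral {- real N..real N} (\<lambda>s. F (Complex x0 s)))
    \<le> 27 * pi ^ 3 * D / real N ^ 2 * (4 * real N + 1)"
proof -
  define W where "W = {t. 0 < Re t \<and> Re t < real N + 1} - of_nat ` {n<..N}"
  have "open W" unfolding W_def
    by (intro open_Diff finite_imp_closed)
      (auto simp: Collect_conj_eq intro!: open_Int open_halfspace_Re_gt open_halfspace_Re_lt)
  have "real n \<le> real N" using \<open>n \<le> N\<close> by simp
  hence "x0 \<le> real N + 1/2" "- real N < real N" using x0 by linarith+
  have "norm (contour_integral (rectpath (Complex x0 (- real N)) (Complex (real N + 1/2) (real N))) F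
      + \<i> * integral {- real N..real N} (\<lambda>s. F (Complex x0 s)))
      \<le> 27 * pi ^ 3 * D / real N ^ 2 * (2 * (real N + 1/2 - x0) + (real N - - real N))"
  proof (rule norm_rectpath_integral_add_left_edge_le[OF _ \<open>open W\<close>])
    show "F holomorphic_on W" unfolding F_def W_def by (rule remove_sings_J_kernel_holomorphic_strip)
    show "path_image (rectpath (Complex x0 (- real N)) (Complex (real N + 1/2) (real N))) \<subseteq> W"
      unfolding W_def by (rule path_image_rectpath_subset_strip[OF x0 \<open>n \<le> N\<close>])
    show "norm (F t) \<le> 27 * pi ^ 3 * D / real N ^ 2"
      if "t \<in> path_image (rectpath (Complex x0 (- real N)) (Complex (real N + 1/2) (real N)))"
        "Re t = real N + 1/2 \<or> Im t = - real N \<or> Im t = real N" for t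
      unfolding F_def using x0 \<open>n \<le> N\<close> D that by (intro norm_J_kernel_i_pi_on_rectpath) auto
  qed (use D(1) \<open>x0 \<le> real N + 1/2\<close> \<open>- real N < real N\<close> in simp_all)
  also have "\<dots> \<le> 27 * pi ^ 3 * D / real N ^ 2 * (4 * real N + 1)"
    using x0 D(1) by (intro mult_left_mono) auto
  finally show ?thesis
    using contour_integral_rectpath_J_kernel[OF x0 \<open>n \<le> N\<close>] by (simp add: F_def)
qed

lemma tendsto_sum_residues_J_kernel:
  assumes "6 \<le> a" "1 \<le> n" "0 < c" "c < 1"
  shows "(\<lambda>N. \<Sum>k\<in>{n<..N}. residue (remove_sings (J_kernel a n (\<i> * of_real pi))) (of_nat k))
    \<longlonglongrightarrow> J a n c (\<i> * of_real pi)"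
proof -
  define F where "F = remove_sings (J_kernel a n (\<i> * of_real pi))"
  define x0 where "x0 = real n * c"
  define g where "g s = F (Complex x0 s)" for s
  define S where "S N = (\<Sum>k\<in>{n<..N}. residue F (of_nat k))" for N
  have x0: "0 < x0" "x0 < real n" using assms(2-4) by (simp_all add: x0_def)
  obtain D where D: "0 < D" "\<And>t. x0 \<le> Re t \<Longrightarrow> norm (R a n t) \<le> D / norm t ^ 2"
    using R_decay[OF x0(1) assms(1)] by blast
  have "norm (2 * pi * \<i> * S N + \<i> * integral {- real N..real N} g)
      \<le> 27 * pi ^ 3 * D / real N ^ 2 * (4 * real N + 1)" if "n \<le> N" for N
    unfolding S_def g_def F_def by (rule norm_sum_residues_add_vline_integral_le[OF x0 that D])
  moreover have "(\<lambda>N. 27 * pi ^ 3 * D / real N ^ 2 * (4 * real N + 1)) \<longlonglongrightarrow> 0" by real_asymp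
  ultimately have "(\<lambda>N. 2 * pi * \<i> * S N + \<i> * integral {- real N..real N} g) \<longlonglongrightarrow> 0"
    by (rule Lim_null_comparison[OF eventually_sequentiallyI[of n]])
  moreover have "(\<lambda>N. integral {- real N..real N} g) \<longlonglongrightarrow> integral UNIV g"
    using vline_integral_J_integrand(1)[OF assms(1,2) _ _ assms(3,4), of "\<i> * of_real pi"]
    by (intro filterlim_compose[OF tendsto_integral_symmetric_interval filterlim_real_sequentially]
        integrable_on_lborel) (simp_all add: g_def[abs_def] F_def x0_def)
  ultimately have "(\<lambda>N. ((2 * pi * \<i> * S N + \<i> * integral {- real N..real N} g)
      - \<i> * integral {- real N..real N} g) / (2 * pi * \<i>)) \<longlonglongrightarrow> (0 - \<i> * integral UNIV g) / (2 * pi * \<i>)"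
    by (intro tendsto_intros) auto
  moreover have "J a n c (\<i> * of_real pi) = (0 - \<i> * integral UNIV g) / (2 * pi * \<i>)"
    using vline_integral_J_integrand(3)[OF assms(1,2) _ _ assms(3,4), of "\<i> * of_real pi"] assms(2)
    by (simp add: J_def g_def[abs_def] F_def x0_def field_simps)
  ultimately show ?thesis by (simp add: S_def F_def)
qed

lemma Re_sum_residues_J_kernel_i_pi:
  assumes "1 \<le> n"
  shows "Re (\<Sum>k\<in>{n<..N}. residue (remove_sings (J_kernel a n (\<i> * of_real pi))) (of_nat k))
    = (\<Sum>k<N. deriv (deriv (Rr a n)) (real (Suc k)) / 2)"
proof -
  define \<rho> where "\<rho> k = residue (remove_sings (J_kernel a n (\<i> * of_real pi))) (of_nat k)" for k
  have Re_\<rho>: "Re (\<rho> k) = deriv (deriv (Rr a n)) (real k) / 2" if "1 \<le> k" for k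
    using that residue_J_kernel_i_pi[OF that, of a n] deriv_R_of_real[of "real k" a n]
    by (simp add: \<rho>_def)
  have "(\<Sum>k\<in>{n<..N}. \<rho> k) = (\<Sum>k\<in>{1..N}. \<rho> k)"
    using assms by (intro sum.mono_neutral_left) (auto simp: \<rho>_def residue_remove_sings_J_kernel_eq_0)
  hence "Re (\<Sum>k\<in>{n<..N}. \<rho> k) = (\<Sum>k\<in>{1..N}. deriv (deriv (Rr a n)) (real k) / 2)"
    by (simp add: Re_sum Re_\<rho>)
  also have "\<dots> = (\<Sum>k<N. deriv (deriv (Rr a n)) (real (Suc k)) / 2)"
    using sum.atLeast1_atMost_eq[of "\<lambda>k. deriv (deriv (Rr a n)) (real k) / 2" N] by simp
  finally show ?thesis unfolding \<rho>_def .
qed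

theorem mainTheorem4:
  fixes a n :: nat and u :: complex and c :: real
  assumes "a \<ge> 6" and "n \<ge> 1"
    and "Re u \<le> 0" and "\<bar>Im u\<bar> \<le> 3 * pi"
    and "0 < c" and "c < 1"
  shows "(\<lambda>y::real. J_integrand a n u (Complex c (- y))) integrable_on UNIV
    \<and> J a n c u = (-1) ^ n * (of_nat n) ^ 2 / (2 * \<i> * of_real pi) * (fact n) ^ (a - 6)
        * vline_integral c (\<lambda>z. (z + 1/2) * Gamma (of_nat n * z) ^ (a + 3)
             * Gamma (of_nat n - of_nat n * z + 1) ^ 3 * Gamma (of_nat n * z + 2 * of_nat n + 1) ^ 3
             / Gamma (of_nat n * z + of_nat n + 1) ^ (a + 3) * exp (of_nat n * u * z))
    \<and> (\<lambda>k. deriv (deriv (Rr a n)) (real (Suc k)) / 2) sums Re (J a n c (\<i> * of_real pi))"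
proof (intro conjI)
  show "(\<lambda>y::real. J_integrand a n u (Complex c (- y))) integrable_on UNIV"
    by (rule vline_integral_J_integrand(2)[OF assms])
  show "J a n c u = (-1) ^ n * (of_nat n) ^ 2 / (2 * \<i> * of_real pi) * (fact n) ^ (a - 6)
        * vline_integral c (\<lambda>z. (z + 1/2) * Gamma (of_nat n * z) ^ (a + 3)
             * Gamma (of_nat n - of_nat n * z + 1) ^ 3 * Gamma (of_nat n * z + 2 * of_nat n + 1) ^ 3
             / Gamma (of_nat n * z + of_nat n + 1) ^ (a + 3) * exp (of_nat n * u * z))"
    by (rule J_eq_Gamma_vline_integral[OF assms(2)])
  have "(\<lambda>N. Re (\<Sum>k\<in>{n<..N}. residue (remove_sings (J_kernel a n (\<i> * of_real pi))) (of_nat k)))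
      \<longlonglongrightarrow> Re (J a n c (\<i> * of_real pi))"
    by (intro tendsto_Re tendsto_sum_residues_J_kernel assms)
  thus "(\<lambda>k. deriv (deriv (Rr a n)) (real (Suc k)) / 2) sums Re (J a n c (\<i> * of_real pi))"
    unfolding sums_def Re_sum_residues_J_kernel_i_pi[OF assms(2)] .
qed

end
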